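(* Let $\upsilon\in(0,1]$, $P_b>0$, $h>0$, $T>0$, $\sigma^2>0$, $B>0$, $L>0$. Define for $t>0$ $$S_{\mathrm{off}}(t)=\upsilon P_bhT+\left(\frac{\sigma^2}{h}-\upsilon P_bh\right)t-\frac{\sigma^2}{h}\,t\,2^{\frac{L}{Bt}}$$ and $$\rho(h)=\frac{\ln 2}{B\left[1+W\!\left(\frac{\upsilon P_bh^2}{\sigma^2e}-\frac1e\right)\right]},$$ where $W$ is the (principal branch of the) Lambert function, i.e. $W(x)e^{W(x)}=x$. Then $S_{\mathrm{off}}$ is a concave function on $(0,\infty)$ and it is maximized at $t=\rho(h)L$.
   Context: $S_{\mathrm{off}}(t)$ is the mobile energy savings when the offloading duration is $t$: the harvested energy $\upsilon P_bh(T-t)$ minus the transmission energy $(2^{L/(Bt)}-1)\frac{\sigma^2}{h}t$ for sending $L$ bits over bandwidth $B$ with channel gain $h$ and noise variance $\sigma^2$. *)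

theory Defs
  imports "HOL-Analysis.Analysis"
begin

text \<open>Principal branch W_0 of the Lambert W function: for x \<ge> -1/e, the unique
  w \<ge> -1 with w * exp w = x.\<close>
definition lambertW :: "real \<Rightarrow> real" where
  "lambertW x = (THE w. w \<ge> -1 \<and> w * exp w = x)"

definition S_off :: "real \<Rightarrow> real \<Rightarrow> real \<Rightarrow> real \<Rightarrow> real \<Rightarrow> real \<Rightarrow> real \<Rightarrow> real \<Rightarrow> real" where
  "S_off \<upsilon> Pb h T sigma2 B L t =
     \<upsilon> * Pb * h * T + (sigma2 / h - \<upsilon> * Pb * h) * t - sigma2 / h * t * 2 powr (L / (B * t))"

definition rho :: "real \<Rightarrow> real \<Rightarrow> real \<Rightarrow> real \<Rightarrow> real \<Rightarrow> real" where
  "rho \<upsilon> Pb sigma2 B h =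
     ln 2 / (B * (1 + lambertW (\<upsilon> * Pb * h^2 / (sigma2 * exp 1) - 1 / exp 1)))"

end

theory Submission
  imports Defs
begin

text \<open>With \<open>k = L ln 2 / B\<close>, \<open>a = \<sigma>\<^sup>2/h\<close> and \<open>c = \<upsilon> P\<^sub>b h\<close> the savings are
  \<open>S(t) = \<upsilon> P\<^sub>b h T + (a - c) t - a t e\<^sup>k\<^sup>/\<^sup>t\<close>. The function \<open>t e\<^sup>k\<^sup>/\<^sup>t\<close> is convex on
  \<open>t > 0\<close>: its derivative is \<open>\<phi>(k/t)\<close> with \<open>\<phi>(u) = e\<^sup>u (1 - u)\<close> decreasing for \<open>u \<ge> 0\<close>.
  Hence \<open>S\<close> is concave and attains its maximum at any stationary point. Substituting
  \<open>w = k/t - 1\<close> turns \<open>S'(t) = 0\<close> into \<open>w e\<^sup>w = (c/a - 1)/e\<close>, whose solution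
  \<open>w > -1\<close> is \<open>W((c/a - 1)/e)\<close>; this gives \<open>t = k/(1 + w) = \<rho>(h) L\<close>.\<close>

lemma mult_exp_strict_mono:
  fixes v w :: real
  assumes "-1 \<le> v" "v < w"
  shows "v * exp v < w * exp w"
proof (rule DERIV_pos_imp_increasing_open[OF assms(2)])
  fix x assume "v < x" "x < w"
  then have "(1 + x) * exp x > 0" using assms by simp
  moreover have "DERIV (\<lambda>x. x * exp x) x :> (1 + x) * exp x"
    by (auto intro!: derivative_eq_intros simp: algebra_simps)
  ultimately show "\<exists>y. DERIV (\<lambda>x. x * exp x) x :> y \<and> y > 0" by blast
qed (intro continuous_intros)

lemma lambertW_eqI:
  assumes "-1 \<le> w" "w * exp w = x"
  shows "lambertW x = w"
  unfolding lambertW_def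
proof (rule the_equality)
  fix w' assume w': "-1 \<le> w' \<and> w' * exp w' = x"
  show "w' = w"
    using mult_exp_strict_mono[of w w'] mult_exp_strict_mono[of w' w] w' assms
    by (cases w' w rule: linorder_cases) auto
qed (use assms in blast)

lemma mult_exp_surj:
  fixes x :: real
  assumes "- 1 / exp 1 \<le> x"
  obtains w where "-1 \<le> w" "w * exp w = x"
proof -
  define b where "b = max x 0"
  have "(-1) * exp (-1) \<le> x" using assms by (simp add: exp_minus field_simps)
  moreover have "x \<le> b * exp b"
  proof (cases "x \<le> 0")
    case False
    then show ?thesis using mult_left_mono[of 1 "exp x" x] by (simp add: b_def)
  qed (simp add: b_def)
  moreover have "-1 \<le> b" by (simp add: b_def)
  moreover have "continuous_on {-1..b} (\<lambda>x. x * exp x)" by (intro continuous_intros)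
  ultimately obtain w where "-1 \<le> w" "w * exp w = x"
    using IVT'[of "\<lambda>x. x * exp x" "-1" x b] by auto
  then show ?thesis by (rule that)
qed

lemma lambertW_gt_minus_one:
  fixes x :: real
  assumes "- 1 / exp 1 < x"
  shows "lambertW x > -1" and "lambertW x * exp (lambertW x) = x"
proof -
  obtain w where w: "-1 \<le> w" "w * exp w = x"
    using mult_exp_surj[of x] assms by (auto simp: less_imp_le)
  have "w \<noteq> -1"
  proof
    assume "w = -1"
    then have "x = - 1 / exp 1" using w(2) by (simp add: exp_minus divide_inverse)
    then show False using assms by simp
  qed
  with w show "lambertW x > -1" "lambertW x * exp (lambertW x) = x"
    by (simp_all add: lambertW_eqI)
qed

lemma exp_mult_one_minus_antimono:
  fixes u v :: real
  assumes "0 \<le> u" "u \<le> v"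
  shows "exp v * (1 - v) \<le> exp u * (1 - u)"
proof -
  have "DERIV (\<lambda>x. exp x * (1 - x)) x :> - x * exp x" for x :: real
    by (auto intro!: derivative_eq_intros simp: algebra_simps)
  moreover have "- x * exp x \<le> 0" if "u \<le> x" for x
    using assms that by simp
  ultimately show ?thesis
    using DERIV_nonpos_imp_nonincreasing[of u v "\<lambda>x. exp x * (1 - x)"] assms by blast
qed

lemma has_real_derivative_mult_exp_divide:
  fixes k t :: real
  assumes "t \<noteq> 0"
  shows "((\<lambda>t. t * exp (k / t)) has_real_derivative exp (k / t) * (1 - k / t)) (at t)"
  using assms by (auto intro!: derivative_eq_intros simp: field_simps power2_eq_square)

lemma convex_on_mult_exp_divide:
  fixes k :: real
  assumes "0 \<le> k"
  shows "convex_on {0<..} (\<lambda>t. t * exp (k / t))"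
proof (rule convex_on_realI)
  fix x y :: real
  assume "x \<in> {0<..}" "y \<in> {0<..}" "x \<le> y"
  then have "0 \<le> k / y" "k / y \<le> k / x"
    using assms by (auto intro: divide_left_mono)
  then show "exp (k / x) * (1 - k / x) \<le> exp (k / y) * (1 - k / y)"
    by (rule exp_mult_one_minus_antimono)
qed (auto intro: has_real_derivative_mult_exp_divide)

lemma concave_on_stationary_imp_max:
  fixes f :: "real \<Rightarrow> real"
  assumes "concave_on A f" "open A" "connected A" "c \<in> A" "x \<in> A"
    and "(f has_real_derivative 0) (at c)"
  shows "f x \<le> f c"
proof -
  have "((\<lambda>x. - f x) has_real_derivative 0) (at c within A)"
    using DERIV_minus[OF assms(6)] by (simp add: has_field_derivative_at_within)
  then show ?thesis
    using convex_on_imp_above_tangent[of A "\<lambda>x. - f x" c x 0] assms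
    by (simp add: concave_on_def interior_open)
qed

lemma S_off_eq:
  "S_off \<upsilon> Pb h T sigma2 B L =
     (\<lambda>t. \<upsilon> * Pb * h * T + (sigma2 / h - \<upsilon> * Pb * h) * t
          - sigma2 / h * (t * exp (L * ln 2 / B / t)))"
  by (simp add: fun_eq_iff S_off_def powr_def mult.commute)

lemma stationary_point_lambertW:
  fixes a c k :: real
  assumes "0 < a" "0 < c" "0 < k"
  defines "t\<^sub>0 \<equiv> k / (1 + lambertW ((c / a - 1) / exp 1))"
  shows "0 < t\<^sub>0" and "(a - c) - a * (exp (k / t\<^sub>0) * (1 - k / t\<^sub>0)) = 0"
proof -
  define w where "w = lambertW ((c / a - 1) / exp 1)"
  have "- 1 / exp 1 < (c / a - 1) / exp 1"
    using assms by (intro divide_strict_right_mono) auto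
  then have w: "-1 < w" "w * exp w = (c / a - 1) / exp 1"
    unfolding w_def by (rule lambertW_gt_minus_one)+
  then show "0 < t\<^sub>0" using assms by (simp add: t\<^sub>0_def flip: w_def)
  have "k / t\<^sub>0 = 1 + w" using assms w by (simp add: t\<^sub>0_def flip: w_def)
  then have "exp (k / t\<^sub>0) * (1 - k / t\<^sub>0) = - exp 1 * (w * exp w)"
    by (simp add: exp_add algebra_simps)
  also have "\<dots> = 1 - c / a" using w(2) by (simp add: field_simps)
  finally show "(a - c) - a * (exp (k / t\<^sub>0) * (1 - k / t\<^sub>0)) = 0"
    using assms by (simp add: field_simps)
qed

theorem lemma4:
  fixes \<upsilon> Pb h T sigma2 B L :: real
  assumes "0 < \<upsilon>" "\<upsilon> \<le> 1" "Pb > 0" "h > 0" "T > 0" "sigma2 > 0" "B > 0" "L > 0"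
  shows "concave_on {0<..} (S_off \<upsilon> Pb h T sigma2 B L)
    \<and> rho \<upsilon> Pb sigma2 B h * L > 0
    \<and> (\<forall>t>0. S_off \<upsilon> Pb h T sigma2 B L t \<le> S_off \<upsilon> Pb h T sigma2 B L (rho \<upsilon> Pb sigma2 B h * L))"
proof -
  define a c k where "a = sigma2 / h" and "c = \<upsilon> * Pb * h" and "k = L * ln 2 / B"
  have pos: "0 < a" "0 < c" "0 < k" using assms by (simp_all add: a_def c_def k_def)
  define S where "S = (\<lambda>t. \<upsilon> * Pb * h * T + (a - c) * t - a * (t * exp (k / t)))"
  define t\<^sub>0 where "t\<^sub>0 = k / (1 + lambertW ((c / a - 1) / exp 1))"
  have S_off: "S_off \<upsilon> Pb h T sigma2 B L = S"
    by (simp add: S_off_eq S_def a_def c_def k_def)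
  have "\<upsilon> * Pb * h\<^sup>2 / (sigma2 * exp 1) - 1 / exp 1 = (c / a - 1) / exp 1"
    using assms by (simp add: a_def c_def field_simps power2_eq_square)
  then have rho: "rho \<upsilon> Pb sigma2 B h * L = t\<^sub>0"
    by (simp add: rho_def t\<^sub>0_def k_def)
  have "concave_on {0<..} S"
    unfolding S_def using pos convex_on_mult_exp_divide[of k]
    by (intro concave_on_diff convex_on_cmul) (auto simp: concave_on_iff algebra_simps simp flip: distrib_right)
  moreover have "0 < t\<^sub>0" and "(a - c) - a * (exp (k / t\<^sub>0) * (1 - k / t\<^sub>0)) = 0"
    using stationary_point_lambertW[OF pos] by (simp_all add: t\<^sub>0_def)
  moreover have "(S has_real_derivative
      (0 + (a - c) * 1) - a * (exp (k / t\<^sub>0) * (1 - k / t\<^sub>0))) (at t\<^sub>0)"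
    unfolding S_def using \<open>0 < t\<^sub>0\<close>
    by (intro DERIV_diff DERIV_add DERIV_cmult DERIV_const DERIV_ident
        has_real_derivative_mult_exp_divide) simp
  ultimately have "(S has_real_derivative 0) (at t\<^sub>0)" by simp
  with \<open>concave_on {0<..} S\<close> \<open>0 < t\<^sub>0\<close> show ?thesis
    unfolding S_off rho using concave_on_stationary_imp_max[of "{0<..}" S t\<^sub>0] by auto
qed

end
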